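(* Let $m\in\mathbb{N}$ and let $V=\sum_{k\in\mathbb{Z}}\widehat V(2k)e^{i2k\pi x}$ be a 1-periodic complex-valued distribution, regarded both as an element of $H_{per}^{-m}$ (with $\widehat V(2k+1)=0$ for all $k$) and of $H_+^{-m}$. Let $S(V)=D^{2m}\dotplus V$ on $L_2(-1,1)$ and $S_{\pm}(V)=D_{\pm}^{2m}\dotplus V$ on $L_2(0,1)$ be the corresponding $m$-sectorial form-sum operators. Then, under the decomposition $L_2(-1,1)=H^0_{per,+}\oplus H^0_{per,-}$ and the identifications $I_\pm:L_2(0,1)=H_\pm^0\to H^0_{per,\pm}$, $$S(V)=S_{+}(V)\oplus S_{-}(V),$$ and consequently $$\mathrm{spec}(S)=\mathrm{spec}(S_{+})\cup\mathrm{spec}(S_{-}),$$ where $\mathrm{spec}$ denotes the discrete spectrum counted with algebraic multiplicities (the union being the union of multisets).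
   Context: For $s\in\mathbb{R}$: $H_{per}^{s}$ is the space of 2-periodic series $f=\sum_{k\in\mathbb{Z}}\widehat f(k)e^{ik\pi x}$ on $[-1,1]$ with $\|f\|^2=\sum_k\langle k\rangle^{2s}|\widehat f(k)|^2<\infty$; $H_{+}^{s}$ is the space of series $f=\sum_{k}\widehat f(2k)e^{i2k\pi x}$ on $[0,1]$ with $\sum_k\langle 2k\rangle^{2s}|\widehat f(2k)|^2<\infty$; $H_{-}^{s}$ is the space of series $f=\sum_{k}\widehat f(2k+1)e^{i(2k+1)\pi x}$ on $[0,1]$ with $\sum_k\langle 2k+1\rangle^{2s}|\widehat f(2k+1)|^2<\infty$; $\langle k\rangle=1+|k|$. $H_{per}^0=L_2(-1,1)$, $H_\pm^0=L_2(0,1)$. $H^s_{per,+}=\{f\in H^s_{per}:\widehat f(2k+1)=0\ \forall k\}$, $H^s_{per,-}=\{f\in H^s_{per}:\widehat f(2k)=0\ \forall k\}$, so $H^s_{per}=H^s_{per,+}\oplus H^s_{per,-}$. $I_\pm:H^s_\pm\to H^s_{per,\pm}$ extends an element on $[0,1]$, given by its Fourier series, to the same series on $[-1,1]$; these are isometric isomorphisms. $D=-i\,d/dx$ on $H^1_{per}$ and $D_\pm=-i\,d/dx$ on $H^1_\pm$; $D^{2m}=|D|^{2m}$, $D_\pm^{2m}=|D_\pm|^{2m}$ act as multiplication by $(n\pi)^{2m}$ on the mode $e^{in\pi x}$. Products $V(x)u$ are formal products of Fourier series: $V(x)u=\sum_n(\sum_j\widehat V(n-j)\widehat u(j))e^{in\pi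 x}$. $S(V)$ is the $m$-sectorial operator on $L_2(-1,1)$ associated with the closed sectorial form $\langle D^{2m}u,v\rangle+\langle Vu,v\rangle$ on $H^m_{per}$ (pairing extending the $L_2(-1,1)$ inner product), with $\mathrm{Dom}(S)=\{u\in H^m_{per}: D^{2m}u+Vu\in L_2(-1,1)\}$, $S(V)u=D^{2m}u+Vu$; $S_\pm(V)$ is the $m$-sectorial operator on $L_2(0,1)$ associated with the form $\langle D_{\pm}^{2m}u,v\rangle_{\pm}+\langle Vu,v\rangle_{\pm}$ on $H_\pm^m$, with $\mathrm{Dom}(S_{\pm})=\{u\in H_{\pm}^{m}\mid D_{\pm}^{2m}u+Vu\in L_{2}(0,1)\}$, $S_\pm(V)u=D_{\pm}^{2m}u+Vu$. The spectra of these operators are discrete; $\mathrm{spec}(A)$ lists the eigenvalues with algebraic multiplicity, ordered lexicographically (by real part, then imaginary part). *)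

theory Defs
  imports "HOL-Analysis.Analysis"
begin

text \<open>All function spaces are represented by Fourier coefficients, exactly as in the paper,
  where they are defined as spaces of Fourier series.
  An element of H_per^s is a coefficient function f :: int => complex, with f n the
  coefficient of exp(i n pi x) on [-1,1].
  An element of H_+^s is a :: int => complex, a k the coefficient of exp(i 2k pi x) on [0,1].
  An element of H_-^s is b :: int => complex, b k the coefficient of exp(i (2k+1) pi x) on [0,1].\<close>

definition jbr :: "int \<Rightarrow> real" where
  "jbr k = 1 + real_of_int \<bar>k\<bar>"

definition Hper :: "real \<Rightarrow> (int \<Rightarrow> complex) set" where
  "Hper s = {f. (\<lambda>n. jbr n powr (2 * s) * (cmod (f n))^2) summable_on UNIV}"

definition Hplus :: "real \<Rightarrow> (int \<Rightarrow> complex) set" where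
  "Hplus s = {a. (\<lambda>k. jbr (2*k) powr (2 * s) * (cmod (a k))^2) summable_on UNIV}"

definition Hminus :: "real \<Rightarrow> (int \<Rightarrow> complex) set" where
  "Hminus s = {b. (\<lambda>k. jbr (2*k+1) powr (2 * s) * (cmod (b k))^2) summable_on UNIV}"

text \<open>Extension maps I_+ : H_+ -> H_per,+ and I_- : H_- -> H_per,- (same series on [-1,1]).\<close>

definition Iplus :: "(int \<Rightarrow> complex) \<Rightarrow> (int \<Rightarrow> complex)" where
  "Iplus a = (\<lambda>n. if even n then a (n div 2) else 0)"

definition Iminus :: "(int \<Rightarrow> complex) \<Rightarrow> (int \<Rightarrow> complex)" where
  "Iminus b = (\<lambda>n. if odd n then b ((n - 1) div 2) else 0)"

text \<open>Formal products V u of Fourier series; Vh n is the coefficient of exp(i n pi x) in V.\<close>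

definition mult_per :: "(int \<Rightarrow> complex) \<Rightarrow> (int \<Rightarrow> complex) \<Rightarrow> (int \<Rightarrow> complex)" where
  "mult_per Vh u = (\<lambda>n. \<Sum>\<^sub>\<infinity>j. Vh (n - j) * u j)"

definition mult_plus :: "(int \<Rightarrow> complex) \<Rightarrow> (int \<Rightarrow> complex) \<Rightarrow> (int \<Rightarrow> complex)" where
  "mult_plus Vh a = (\<lambda>k. \<Sum>\<^sub>\<infinity>j. Vh (2*k - 2*j) * a j)"

definition mult_minus :: "(int \<Rightarrow> complex) \<Rightarrow> (int \<Rightarrow> complex) \<Rightarrow> (int \<Rightarrow> complex)" where
  "mult_minus Vh b = (\<lambda>k. \<Sum>\<^sub>\<infinity>j. Vh ((2*k+1) - (2*j+1)) * b j)"

definition S_per :: "nat \<Rightarrow> (int \<Rightarrow> complex) \<Rightarrow> (int \<Rightarrow> complex) \<Rightarrow> (int \<Rightarrow> complex)" where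
  "S_per m Vh u = (\<lambda>n. complex_of_real ((real_of_int n * pi) ^ (2*m)) * u n + mult_per Vh u n)"

definition S_per_dom :: "nat \<Rightarrow> (int \<Rightarrow> complex) \<Rightarrow> (int \<Rightarrow> complex) set" where
  "S_per_dom m Vh = {u \<in> Hper (real m). S_per m Vh u \<in> Hper 0}"

definition S_plus :: "nat \<Rightarrow> (int \<Rightarrow> complex) \<Rightarrow> (int \<Rightarrow> complex) \<Rightarrow> (int \<Rightarrow> complex)" where
  "S_plus m Vh a = (\<lambda>k. complex_of_real ((real_of_int (2*k) * pi) ^ (2*m)) * a k + mult_plus Vh a k)"

definition S_plus_dom :: "nat \<Rightarrow> (int \<Rightarrow> complex) \<Rightarrow> (int \<Rightarrow> complex) set" where
  "S_plus_dom m Vh = {a \<in> Hplus (real m). S_plus m Vh a \<in> Hplus 0}"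

definition S_minus :: "nat \<Rightarrow> (int \<Rightarrow> complex) \<Rightarrow> (int \<Rightarrow> complex) \<Rightarrow> (int \<Rightarrow> complex)" where
  "S_minus m Vh b = (\<lambda>k. complex_of_real ((real_of_int (2*k+1) * pi) ^ (2*m)) * b k + mult_minus Vh b k)"

definition S_minus_dom :: "nat \<Rightarrow> (int \<Rightarrow> complex) \<Rightarrow> (int \<Rightarrow> complex) set" where
  "S_minus_dom m Vh = {b \<in> Hminus (real m). S_minus m Vh b \<in> Hminus 0}"

definition shiftop :: "((int \<Rightarrow> complex) \<Rightarrow> (int \<Rightarrow> complex)) \<Rightarrow> complex \<Rightarrow> (int \<Rightarrow> complex) \<Rightarrow> (int \<Rightarrow> complex)" where
  "shiftop A z u = (\<lambda>n. A u n - z * u n)"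

definition gen_eigenspace :: "(int \<Rightarrow> complex) set \<Rightarrow> ((int \<Rightarrow> complex) \<Rightarrow> (int \<Rightarrow> complex)) \<Rightarrow> complex \<Rightarrow> (int \<Rightarrow> complex) set" where
  "gen_eigenspace D A z = {u. \<exists>k. (\<forall>i<k. (shiftop A z ^^ i) u \<in> D) \<and> (shiftop A z ^^ k) u = (\<lambda>n. 0)}"

definition lin_indep :: "(int \<Rightarrow> complex) set \<Rightarrow> bool" where
  "lin_indep F \<longleftrightarrow> (\<forall>c. (\<forall>n. (\<Sum>f\<in>F. c f * f n) = 0) \<longrightarrow> (\<forall>f\<in>F. c f = 0))"

definition alg_mult :: "(int \<Rightarrow> complex) set \<Rightarrow> ((int \<Rightarrow> complex) \<Rightarrow> (int \<Rightarrow> complex)) \<Rightarrow> complex \<Rightarrow> enat" where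
  "alg_mult D A z = (SUP F \<in> {F. finite F \<and> F \<subseteq> gen_eigenspace D A z \<and> lin_indep F}. enat (card F))"

end

theory Submission
  imports Defs "HOL-Library.Function_Algebras"
begin

text \<open>Since \<open>V\<close> has only even Fourier modes, multiplication by \<open>V\<close> and \<open>D\<^sup>2\<^sup>m\<close> map even
  modes to even modes and odd modes to odd modes. Splitting every coefficient sequence into its
  even and odd subsequences therefore decomposes \<open>S(V)\<close>, its domain, all iterates of
  \<open>S(V) - z\<close> and hence every generalized eigenspace as a direct sum of the corresponding objects
  for \<open>S\<^sub>+(V)\<close> and \<open>S\<^sub>-(V)\<close>. The dimension of a direct sum is the sum of the dimensions.\<close>

definition even_part :: "(int \<Rightarrow> complex) \<Rightarrow> int \<Rightarrow> complex" where
  "even_part u = (\<lambda>k. u (2*k))"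

definition odd_part :: "(int \<Rightarrow> complex) \<Rightarrow> int \<Rightarrow> complex" where
  "odd_part u = (\<lambda>k. u (2*k+1))"

lemma Iplus_even [simp]: "Iplus a (2*k) = a k"
  and Iplus_odd [simp]: "Iplus a (2*k+1) = 0"
  and Iminus_even [simp]: "Iminus b (2*k) = 0"
  and Iminus_odd [simp]: "Iminus b (2*k+1) = b k"
  by (simp_all add: Iplus_def Iminus_def)

lemma even_part_Iplus [simp]: "even_part (Iplus a) = a"
  and odd_part_Iplus [simp]: "odd_part (Iplus a) = 0"
  and even_part_Iminus [simp]: "even_part (Iminus b) = 0"
  and odd_part_Iminus [simp]: "odd_part (Iminus b) = b"
  by (simp_all add: even_part_def odd_part_def fun_eq_iff)

lemma even_part_add [simp]: "even_part (u + v) = even_part u + even_part v"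
  and odd_part_add [simp]: "odd_part (u + v) = odd_part u + odd_part v"
  and even_part_zero [simp]: "even_part 0 = 0"
  and odd_part_zero [simp]: "odd_part 0 = 0"
  by (simp_all add: even_part_def odd_part_def fun_eq_iff)

lemma Iplus_even_part_add_Iminus_odd_part: "Iplus (even_part u) + Iminus (odd_part u) = u"
proof
  fix n :: int
  show "(Iplus (even_part u) + Iminus (odd_part u)) n = u n"
  proof (cases "even n")
    case True
    then show ?thesis by (auto simp: Iplus_def Iminus_def even_part_def)
  next
    case False
    then have "2 * ((n - 1) div 2) + 1 = n" by presburger
    with False show ?thesis by (auto simp: Iplus_def Iminus_def odd_part_def)
  qed
qed

lemma parts_eq_zero_iff: "u = 0 \<longleftrightarrow> even_part u = 0 \<and> odd_part u = 0"
  by (metis Iplus_even_part_add_Iminus_odd_part even_part_zero odd_part_zero)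

lemma summable_on_int_iff_even_odd:
  fixes f :: "int \<Rightarrow> 'a::banach"
  shows "f summable_on UNIV \<longleftrightarrow>
    (\<lambda>k. f (2*k)) summable_on UNIV \<and> (\<lambda>k. f (2*k+1)) summable_on UNIV"
proof -
  have evens: "f summable_on range (\<lambda>k. 2*k) \<longleftrightarrow> (\<lambda>k. f (2*k)) summable_on UNIV"
    using summable_on_reindex[of "\<lambda>k::int. 2*k" UNIV f] by (simp add: inj_def o_def)
  have odds: "f summable_on range (\<lambda>k. 2*k+1) \<longleftrightarrow> (\<lambda>k. f (2*k+1)) summable_on UNIV"
    using summable_on_reindex[of "\<lambda>k::int. 2*k+1" UNIV f] by (simp add: inj_def o_def)
  have disjoint: "range (\<lambda>k::int. 2*k) \<inter> range (\<lambda>k. 2*k+1) = {}"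
    by auto presburger
  have "range (\<lambda>k::int. 2*k) \<union> range (\<lambda>k. 2*k+1) = UNIV"
  proof (intro set_eqI iffI)
    fix n :: int
    have "n = 2*(n div 2) \<or> n = 2*(n div 2) + 1" by presburger
    then show "n \<in> range (\<lambda>k. 2*k) \<union> range (\<lambda>k. 2*k+1)" by blast
  qed simp
  then show ?thesis
    using evens odds summable_on_Un_disjoint[OF _ _ disjoint, of f] summable_on_subset_banach
    by (metis UNIV_I subsetI)
qed

lemma Hper_iff_parts: "u \<in> Hper s \<longleftrightarrow> even_part u \<in> Hplus s \<and> odd_part u \<in> Hminus s"
  unfolding Hper_def Hplus_def Hminus_def even_part_def odd_part_def
  by (simp add: summable_on_int_iff_even_odd[of "\<lambda>n. jbr n powr (2 * s) * (cmod (u n))^2"])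

lemma mult_per_even:
  assumes odd_modes_vanish: "\<And>k. Vh (2*k+1) = 0"
  shows "mult_per Vh u (2*k) = mult_plus Vh (even_part u) k"
proof -
  have "Vh (2*k - j) * u j = 0" if "j \<notin> range (\<lambda>i. 2*i)" for j
  proof -
    have "odd j"
    proof
      assume "even j"
      then have "j = 2*(j div 2)" by presburger
      with that show False by blast
    qed
    then have "2*k - j = 2*((2*k - j - 1) div 2) + 1" by presburger
    then show ?thesis by (metis odd_modes_vanish mult_zero_left)
  qed
  then have "mult_per Vh u (2*k) = (\<Sum>\<^sub>\<infinity>j\<in>range (\<lambda>i. 2*i). Vh (2*k - j) * u j)"
    unfolding mult_per_def by (intro infsum_cong_neutral) auto
  also have "\<dots> = (\<Sum>\<^sub>\<infinity>i. Vh (2*k - 2*i) * u (2*i))"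
    by (subst infsum_reindex) (simp_all add: inj_def o_def)
  finally show ?thesis by (simp add: mult_plus_def even_part_def)
qed

lemma mult_per_odd:
  assumes odd_modes_vanish: "\<And>k. Vh (2*k+1) = 0"
  shows "mult_per Vh u (2*k+1) = mult_minus Vh (odd_part u) k"
proof -
  have "Vh (2*k+1 - j) * u j = 0" if "j \<notin> range (\<lambda>i. 2*i+1)" for j
  proof -
    have "even j"
    proof (rule ccontr)
      assume "odd j"
      then have "j = 2*((j - 1) div 2) + 1" by presburger
      with that show False by blast
    qed
    then have "2*k+1 - j = 2*((2*k - j) div 2) + 1" by presburger
    then show ?thesis by (metis odd_modes_vanish mult_zero_left)
  qed
  then have "mult_per Vh u (2*k+1) = (\<Sum>\<^sub>\<infinity>j\<in>range (\<lambda>i. 2*i+1). Vh (2*k+1 - j) * u j)"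
    unfolding mult_per_def by (intro infsum_cong_neutral) auto
  also have "\<dots> = (\<Sum>\<^sub>\<infinity>i. Vh (2*k+1 - (2*i+1)) * u (2*i+1))"
    by (subst infsum_reindex) (simp_all add: inj_def o_def)
  finally show ?thesis by (simp add: mult_minus_def odd_part_def)
qed

lemma even_part_S_per:
  assumes "\<And>k. Vh (2*k+1) = 0"
  shows "even_part (S_per m Vh u) = S_plus m Vh (even_part u)"
  using mult_per_even[of Vh, OF assms] by (simp add: even_part_def S_per_def S_plus_def)

lemma odd_part_S_per:
  assumes "\<And>k. Vh (2*k+1) = 0"
  shows "odd_part (S_per m Vh u) = S_minus m Vh (odd_part u)"
  using mult_per_odd[of Vh, OF assms] by (simp add: odd_part_def S_per_def S_minus_def)

lemma S_per_dom_iff_parts: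
  assumes "\<And>k. Vh (2*k+1) = 0"
  shows "u \<in> S_per_dom m Vh \<longleftrightarrow> even_part u \<in> S_plus_dom m Vh \<and> odd_part u \<in> S_minus_dom m Vh"
  unfolding S_per_dom_def S_plus_dom_def S_minus_dom_def
  using Hper_iff_parts[of u] Hper_iff_parts[of "S_per m Vh u"]
    even_part_S_per[of Vh, OF assms] odd_part_S_per[of Vh, OF assms] by auto

lemma S_plus_zero [simp]: "S_plus m Vh 0 = 0"
  and S_minus_zero [simp]: "S_minus m Vh 0 = 0"
  by (simp_all add: S_plus_def S_minus_def mult_plus_def mult_minus_def fun_eq_iff)

lemma zero_in_S_plus_dom: "0 \<in> S_plus_dom m Vh"
  and zero_in_S_minus_dom: "0 \<in> S_minus_dom m Vh"
  by (simp_all add: S_plus_dom_def S_minus_dom_def Hplus_def Hminus_def)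

definition cscale :: "complex \<Rightarrow> (int \<Rightarrow> complex) \<Rightarrow> int \<Rightarrow> complex" where
  "cscale c f = (\<lambda>n. c * f n)"

interpretation coeff_space: vector_space cscale
  by unfold_locales (auto simp: cscale_def fun_eq_iff algebra_simps)

interpretation Iplus_linear: Vector_Spaces.linear cscale cscale Iplus
  by unfold_locales (auto simp: cscale_def fun_eq_iff Iplus_def)

interpretation Iminus_linear: Vector_Spaces.linear cscale cscale Iminus
  by unfold_locales (auto simp: cscale_def fun_eq_iff Iminus_def)

lemma inj_Iplus: "inj Iplus"
  and inj_Iminus: "inj Iminus"
  by (metis injI even_part_Iplus, metis injI odd_part_Iminus)

lemma sum_cscale_apply: "(\<Sum>f\<in>F. cscale (c f) f) n = (\<Sum>f\<in>F. c f * f n)"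
  by (induction F rule: infinite_finite_induct) (auto simp: cscale_def)

lemma lin_indep_iff_independent: "finite F \<Longrightarrow> lin_indep F \<longleftrightarrow> coeff_space.independent F"
  unfolding lin_indep_def coeff_space.dependent_finite
  by (auto simp: fun_eq_iff sum_cscale_apply)

lemma lin_indep_Iplus_Un_Iminus:
  assumes "finite Fp" "finite Fm" "lin_indep Fp" "lin_indep Fm"
  shows "lin_indep (Iplus ` Fp \<union> Iminus ` Fm)"
  unfolding lin_indep_def
proof (intro allI impI ballI)
  fix c f
  let ?F = "Iplus ` Fp \<union> Iminus ` Fm"
  assume comb: "\<forall>n. (\<Sum>f\<in>?F. c f * f n) = 0" and f: "f \<in> ?F"
  have "finite ?F" using assms(1,2) by simp
  have "(\<Sum>a\<in>Fp. c (Iplus a) * a k) = 0" for k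
  proof -
    have "(\<Sum>a\<in>Fp. c (Iplus a) * a k) = (\<Sum>g\<in>Iplus ` Fp. c g * g (2*k))"
      by (simp add: sum.reindex inj_on_subset[OF inj_Iplus])
    also have "\<dots> = (\<Sum>g\<in>?F. c g * g (2*k))"
      using \<open>finite ?F\<close> by (intro sum.mono_neutral_left) auto
    finally show ?thesis using comb by simp
  qed
  then have "\<forall>a\<in>Fp. c (Iplus a) = 0"
    using assms(3)[unfolded lin_indep_def, rule_format, of "\<lambda>a. c (Iplus a)"] by blast
  moreover have "(\<Sum>b\<in>Fm. c (Iminus b) * b k) = 0" for k
  proof -
    have "(\<Sum>b\<in>Fm. c (Iminus b) * b k) = (\<Sum>g\<in>Iminus ` Fm. c g * g (2*k+1))"
      by (simp add: sum.reindex inj_on_subset[OF inj_Iminus])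
    also have "\<dots> = (\<Sum>g\<in>?F. c g * g (2*k+1))"
      using \<open>finite ?F\<close> by (intro sum.mono_neutral_left) auto
    finally show ?thesis using comb by simp
  qed
  then have "\<forall>b\<in>Fm. c (Iminus b) = 0"
    using assms(4)[unfolded lin_indep_def, rule_format, of "\<lambda>b. c (Iminus b)"] by blast
  ultimately show "c f = 0" using f by blast
qed

lemma subset_span_Iplus_Un_Iminus:
  assumes "even_part ` F \<subseteq> coeff_space.span Bp" "odd_part ` F \<subseteq> coeff_space.span Bm"
  shows "F \<subseteq> coeff_space.span (Iplus ` Bp \<union> Iminus ` Bm)"
proof
  fix f assume "f \<in> F"
  then have "Iplus (even_part f) \<in> coeff_space.span (Iplus ` Bp)"
    "Iminus (odd_part f) \<in> coeff_space.span (Iminus ` Bm)"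
    using assms by (auto simp: Iplus_linear.span_image Iminus_linear.span_image)
  moreover have "coeff_space.span (Iplus ` Bp) \<subseteq> coeff_space.span (Iplus ` Bp \<union> Iminus ` Bm)"
    "coeff_space.span (Iminus ` Bm) \<subseteq> coeff_space.span (Iplus ` Bp \<union> Iminus ` Bm)"
    by (rule coeff_space.span_mono, blast)+
  ultimately have "Iplus (even_part f) + Iminus (odd_part f) \<in> coeff_space.span (Iplus ` Bp \<union> Iminus ` Bm)"
    by (intro coeff_space.span_add) auto
  then show "f \<in> coeff_space.span (Iplus ` Bp \<union> Iminus ` Bm)"
    by (simp add: Iplus_even_part_add_Iminus_odd_part)
qed

lemma card_Iplus_Un_Iminus:
  assumes "finite Fp" "finite Fm" "0 \<notin> Fp"
  shows "card (Iplus ` Fp \<union> Iminus ` Fm) = card Fp + card Fm"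
proof -
  have "Iplus ` Fp \<inter> Iminus ` Fm = {}"
    using assms(3) by (auto dest: arg_cong[where f = even_part])
  then show ?thesis
    using assms(1,2) by (simp add: card_Un_disjoint card_image inj_on_subset[OF inj_Iplus]
        inj_on_subset[OF inj_Iminus])
qed

lemma Sup_add_Sup_le_enat:
  fixes A B :: "enat set"
  assumes "A \<noteq> {}" "B \<noteq> {}" and le: "\<And>x y. x \<in> A \<Longrightarrow> y \<in> B \<Longrightarrow> x + y \<le> C"
  shows "Sup A + Sup B \<le> C"
proof (cases C)
  case (enat c)
  obtain x0 y0 where "x0 \<in> A" "y0 \<in> B" using assms(1,2) by blast
  have "finite A"
    by (rule finite_enat_bounded[of _ c]) (metis enat le \<open>y0 \<in> B\<close> le_iff_add order_trans)
  moreover have "finite B"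
    by (rule finite_enat_bounded[of _ c])
      (metis enat le \<open>x0 \<in> A\<close> le_iff_add add.commute order_trans)
  ultimately have "Sup A \<in> A" "Sup B \<in> B"
    using assms(1,2) by (simp_all add: Sup_enat_def)
  then show ?thesis using le by blast
qed simp

definition set_rank :: "(int \<Rightarrow> complex) set \<Rightarrow> enat" where
  "set_rank X = (SUP F \<in> {F. finite F \<and> F \<subseteq> X \<and> lin_indep F}. enat (card F))"

lemma alg_mult_eq_set_rank: "alg_mult D A z = set_rank (gen_eigenspace D A z)"
  by (simp add: alg_mult_def set_rank_def)

lemma card_le_set_rank: "finite F \<Longrightarrow> F \<subseteq> X \<Longrightarrow> lin_indep F \<Longrightarrow> enat (card F) \<le> set_rank X"
  unfolding set_rank_def by (rule SUP_upper) auto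

lemma set_rank_le_add_parts:
  assumes parts: "\<And>u. u \<in> G \<Longrightarrow> even_part u \<in> Gp \<and> odd_part u \<in> Gm"
  shows "set_rank G \<le> set_rank Gp + set_rank Gm"
  unfolding set_rank_def[of G]
proof (rule SUP_least)
  fix F assume "F \<in> {F. finite F \<and> F \<subseteq> G \<and> lin_indep F}"
  then have F: "finite F" "F \<subseteq> G" "lin_indep F" by simp_all
  obtain Bp where Bp: "Bp \<subseteq> even_part ` F" "coeff_space.independent Bp"
      "even_part ` F \<subseteq> coeff_space.span Bp"
    by (metis coeff_space.basis_exists)
  obtain Bm where Bm: "Bm \<subseteq> odd_part ` F" "coeff_space.independent Bm"
      "odd_part ` F \<subseteq> coeff_space.span Bm"
    by (metis coeff_space.basis_exists)
  have "finite Bp" "finite Bm"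
    using Bp(1) Bm(1) F(1) by (meson finite_imageI finite_subset)+
  have "Bp \<subseteq> Gp" "Bm \<subseteq> Gm"
    using Bp(1) Bm(1) F(2) parts by blast+
  have F_span: "F \<subseteq> coeff_space.span (Iplus ` Bp \<union> Iminus ` Bm)"
    using Bp(3) Bm(3) by (rule subset_span_Iplus_Un_Iminus)
  have "card F = coeff_space.dim F"
    using F coeff_space.dim_eq_card_independent lin_indep_iff_independent by simp
  also have "\<dots> \<le> card (Iplus ` Bp \<union> Iminus ` Bm)"
    by (rule coeff_space.dim_le_card) (use F_span \<open>finite Bp\<close> \<open>finite Bm\<close> in simp_all)
  also have "\<dots> \<le> card Bp + card Bm"
    using card_Un_le[of "Iplus ` Bp" "Iminus ` Bm"] card_image_le[OF \<open>finite Bp\<close>, of Iplus]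
      card_image_le[OF \<open>finite Bm\<close>, of Iminus] by linarith
  finally have "enat (card F) \<le> enat (card Bp) + enat (card Bm)" by simp
  also have "\<dots> \<le> set_rank Gp + set_rank Gm"
  proof (rule add_mono)
    show "enat (card Bp) \<le> set_rank Gp"
      using Bp(2) \<open>finite Bp\<close> \<open>Bp \<subseteq> Gp\<close> by (simp add: card_le_set_rank lin_indep_iff_independent)
    show "enat (card Bm) \<le> set_rank Gm"
      using Bm(2) \<open>finite Bm\<close> \<open>Bm \<subseteq> Gm\<close> by (simp add: card_le_set_rank lin_indep_iff_independent)
  qed
  finally show "enat (card F) \<le> set_rank Gp + set_rank Gm" .
qed

lemma add_parts_le_set_rank:
  assumes parts: "\<And>a b. a \<in> Gp \<Longrightarrow> b \<in> Gm \<Longrightarrow> Iplus a + Iminus b \<in> G"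
    and "0 \<in> Gp" "0 \<in> Gm"
  shows "set_rank Gp + set_rank Gm \<le> set_rank G"
  unfolding set_rank_def[of Gp] set_rank_def[of Gm]
proof (rule Sup_add_Sup_le_enat)
  let ?indep = "\<lambda>X. {F. finite F \<and> F \<subseteq> X \<and> lin_indep F}"
  have "{} \<in> ?indep X" for X by (simp add: lin_indep_def)
  then show "(\<lambda>F. enat (card F)) ` ?indep Gp \<noteq> {}" "(\<lambda>F. enat (card F)) ` ?indep Gm \<noteq> {}"
    by blast+
  fix x y assume "x \<in> (\<lambda>F. enat (card F)) ` ?indep Gp" "y \<in> (\<lambda>F. enat (card F)) ` ?indep Gm"
  then obtain Fp Fm where Fp: "finite Fp" "Fp \<subseteq> Gp" "lin_indep Fp"
    and Fm: "finite Fm" "Fm \<subseteq> Gm" "lin_indep Fm" and xy: "x = card Fp" "y = card Fm"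
    by blast
  have "0 \<notin> Fp"
    using Fp lin_indep_iff_independent coeff_space.dependent_zero by blast
  have "Iplus ` Fp \<union> Iminus ` Fm \<subseteq> G"
    using parts[of _ 0] parts[of 0] Fp(2) Fm(2) assms(2,3) by auto
  then have "enat (card (Iplus ` Fp \<union> Iminus ` Fm)) \<le> set_rank G"
    using Fp Fm by (intro card_le_set_rank lin_indep_Iplus_Un_Iminus) auto
  then show "x + y \<le> set_rank G"
    using card_Iplus_Un_Iminus[OF Fp(1) Fm(1) \<open>0 \<notin> Fp\<close>] xy by simp
qed

lemma set_rank_parts:
  assumes "\<And>u. u \<in> G \<longleftrightarrow> even_part u \<in> Gp \<and> odd_part u \<in> Gm" "0 \<in> Gp" "0 \<in> Gm"
  shows "set_rank G = set_rank Gp + set_rank Gm"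
proof (rule antisym)
  show "set_rank G \<le> set_rank Gp + set_rank Gm"
    by (rule set_rank_le_add_parts) (simp add: assms(1))
  show "set_rank Gp + set_rank Gm \<le> set_rank G"
    by (rule add_parts_le_set_rank) (simp_all add: assms)
qed

lemma funpow_fixed_zero:
  fixes f :: "'a::zero \<Rightarrow> 'a"
  assumes "f 0 = 0" "(f ^^ k) x = 0" "k \<le> i"
  shows "(f ^^ i) x = 0"
proof -
  have "(f ^^ j) 0 = 0" for j
    using assms(1) by (induction j) simp_all
  moreover have "(f ^^ i) x = (f ^^ (i - k)) ((f ^^ k) x)"
    using assms(3) funpow_add[of "i - k" k f] by simp
  ultimately show ?thesis using assms(2) by simp
qed

lemma gen_eigenspace_iff_eventually:
  assumes "shiftop A z 0 = 0" "0 \<in> D"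
  shows "u \<in> gen_eigenspace D A z \<longleftrightarrow>
    (\<forall>\<^sub>F k in sequentially. (\<forall>i<k. (shiftop A z ^^ i) u \<in> D) \<and> (shiftop A z ^^ k) u = 0)"
  unfolding eventually_sequentially
proof
  assume "u \<in> gen_eigenspace D A z"
  then obtain k0 where below: "\<forall>i<k0. (shiftop A z ^^ i) u \<in> D" and at: "(shiftop A z ^^ k0) u = 0"
    unfolding gen_eigenspace_def zero_fun_def by blast
  have beyond: "(shiftop A z ^^ k) u = 0" if "k0 \<le> k" for k
    using funpow_fixed_zero[OF assms(1) at that] .
  show "\<exists>k0. \<forall>k\<ge>k0. (\<forall>i<k. (shiftop A z ^^ i) u \<in> D) \<and> (shiftop A z ^^ k) u = 0"
  proof (intro exI allI impI conjI)
    fix k i assume "k0 \<le> k" "i < k"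
    show "(shiftop A z ^^ i) u \<in> D"
      using below beyond[of i] assms(2) by (cases "i < k0") auto
  qed (fact beyond)
next
  assume "\<exists>k0. \<forall>k\<ge>k0. (\<forall>i<k. (shiftop A z ^^ i) u \<in> D) \<and> (shiftop A z ^^ k) u = 0"
  then show "u \<in> gen_eigenspace D A z"
    unfolding gen_eigenspace_def zero_fun_def by blast
qed

locale parity_decomposed_operator =
  fixes D :: "(int \<Rightarrow> complex) set" and A :: "(int \<Rightarrow> complex) \<Rightarrow> int \<Rightarrow> complex"
    and Dp :: "(int \<Rightarrow> complex) set" and Ap :: "(int \<Rightarrow> complex) \<Rightarrow> int \<Rightarrow> complex"
    and Dm :: "(int \<Rightarrow> complex) set" and Am :: "(int \<Rightarrow> complex) \<Rightarrow> int \<Rightarrow> complex"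
  assumes even_part_op: "even_part (A u) = Ap (even_part u)"
    and odd_part_op: "odd_part (A u) = Am (odd_part u)"
    and dom_iff_parts: "u \<in> D \<longleftrightarrow> even_part u \<in> Dp \<and> odd_part u \<in> Dm"
    and zero_in_doms: "0 \<in> Dp" "0 \<in> Dm"
    and ops_zero: "Ap 0 = 0" "Am 0 = 0"
begin

lemma dom_eq_direct_sum: "D = {Iplus a + Iminus b | a b. a \<in> Dp \<and> b \<in> Dm}"
proof (intro set_eqI iffI)
  fix u assume "u \<in> D"
  then show "u \<in> {Iplus a + Iminus b | a b. a \<in> Dp \<and> b \<in> Dm}"
    using dom_iff_parts Iplus_even_part_add_Iminus_odd_part[of u, symmetric] by blast
qed (auto simp: dom_iff_parts)

lemma op_direct_sum: "A (Iplus a + Iminus b) = Iplus (Ap a) + Iminus (Am b)"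
proof -
  have "A (Iplus a + Iminus b) =
      Iplus (even_part (A (Iplus a + Iminus b))) + Iminus (odd_part (A (Iplus a + Iminus b)))"
    by (rule Iplus_even_part_add_Iminus_odd_part[symmetric])
  then show ?thesis by (simp add: even_part_op odd_part_op)
qed

lemma even_part_shiftop: "even_part (shiftop A z u) = shiftop Ap z (even_part u)"
proof -
  have "even_part (shiftop A z u) = (\<lambda>k. even_part (A u) k - z * even_part u k)"
    by (simp add: shiftop_def even_part_def)
  then show ?thesis by (simp add: even_part_op shiftop_def)
qed

lemma odd_part_shiftop: "odd_part (shiftop A z u) = shiftop Am z (odd_part u)"
proof -
  have "odd_part (shiftop A z u) = (\<lambda>k. odd_part (A u) k - z * odd_part u k)"
    by (simp add: shiftop_def odd_part_def)
  then show ?thesis by (simp add: odd_part_op shiftop_def)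
qed

lemma even_part_shiftop_power: "even_part ((shiftop A z ^^ i) u) = (shiftop Ap z ^^ i) (even_part u)"
  by (induction i) (simp_all add: even_part_shiftop)

lemma odd_part_shiftop_power: "odd_part ((shiftop A z ^^ i) u) = (shiftop Am z ^^ i) (odd_part u)"
  by (induction i) (simp_all add: odd_part_shiftop)

lemma gen_eigenspace_iff_parts:
  "u \<in> gen_eigenspace D A z \<longleftrightarrow>
    even_part u \<in> gen_eigenspace Dp Ap z \<and> odd_part u \<in> gen_eigenspace Dm Am z"
proof -
  have "A 0 = 0"
    using ops_zero even_part_op[of 0] odd_part_op[of 0] parts_eq_zero_iff[of "A 0"] by simp
  then have shiftop_zero: "shiftop Ap z 0 = 0" "shiftop Am z 0 = 0" "shiftop A z 0 = 0"
    using ops_zero by (simp_all add: shiftop_def zero_fun_def)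
  have "0 \<in> D" using zero_in_doms dom_iff_parts by simp
  have pointwise: "(\<forall>i<k. (shiftop A z ^^ i) u \<in> D) \<and> (shiftop A z ^^ k) u = 0 \<longleftrightarrow>
      ((\<forall>i<k. (shiftop Ap z ^^ i) (even_part u) \<in> Dp) \<and> (shiftop Ap z ^^ k) (even_part u) = 0) \<and>
      ((\<forall>i<k. (shiftop Am z ^^ i) (odd_part u) \<in> Dm) \<and> (shiftop Am z ^^ k) (odd_part u) = 0)"
    for k
    using parts_eq_zero_iff[of "(shiftop A z ^^ k) u"]
    by (simp add: dom_iff_parts even_part_shiftop_power odd_part_shiftop_power) blast
  then show ?thesis
    by (simp only: gen_eigenspace_iff_eventually[OF shiftop_zero(3) \<open>0 \<in> D\<close>]
        gen_eigenspace_iff_eventually[OF shiftop_zero(1) zero_in_doms(1)]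
        gen_eigenspace_iff_eventually[OF shiftop_zero(2) zero_in_doms(2)] eventually_conj_iff)
qed

lemma alg_mult_eq_add: "alg_mult D A z = alg_mult Dp Ap z + alg_mult Dm Am z"
  unfolding alg_mult_eq_set_rank
proof (rule set_rank_parts)
  show "u \<in> gen_eigenspace D A z \<longleftrightarrow>
      even_part u \<in> gen_eigenspace Dp Ap z \<and> odd_part u \<in> gen_eigenspace Dm Am z" for u
    by (rule gen_eigenspace_iff_parts)
  show "0 \<in> gen_eigenspace Dp Ap z" "0 \<in> gen_eigenspace Dm Am z"
    unfolding gen_eigenspace_def by (rule CollectI, rule exI[of _ 0], simp add: zero_fun_def)+
qed

end

theorem theorem6:
  fixes m :: nat and Vh :: "int \<Rightarrow> complex"
  assumes "Vh \<in> Hper (- real m)"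
    and "\<And>k. Vh (2*k+1) = 0"
  shows "S_per_dom m Vh =
           {(\<lambda>n. Iplus a n + Iminus b n) | a b. a \<in> S_plus_dom m Vh \<and> b \<in> S_minus_dom m Vh}
    \<and> (\<forall>a \<in> S_plus_dom m Vh. \<forall>b \<in> S_minus_dom m Vh.
         S_per m Vh (\<lambda>n. Iplus a n + Iminus b n)
           = (\<lambda>n. Iplus (S_plus m Vh a) n + Iminus (S_minus m Vh b) n))
    \<and> (\<forall>z. alg_mult (S_per_dom m Vh) (S_per m Vh) z
           = alg_mult (S_plus_dom m Vh) (S_plus m Vh) z
             + alg_mult (S_minus_dom m Vh) (S_minus m Vh) z)"
proof -
  interpret parity_decomposed_operator "S_per_dom m Vh" "S_per m Vh"
      "S_plus_dom m Vh" "S_plus m Vh" "S_minus_dom m Vh" "S_minus m Vh"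
    using even_part_S_per[of Vh, OF assms(2)] odd_part_S_per[of Vh, OF assms(2)]
      S_per_dom_iff_parts[of Vh, OF assms(2)] zero_in_S_plus_dom zero_in_S_minus_dom
    by unfold_locales simp_all
  show ?thesis
    using dom_eq_direct_sum op_direct_sum alg_mult_eq_add by (simp add: plus_fun_def)
qed

end
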